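(* The set of operators $T\in\mathscr{L}(\mathscr{M}(\Omega))$ that are $\sigma(\mathscr{M}(\Omega),C_b(\Omega))$-continuous (equivalently, weakly continuous operators whose norm adjoint $T^*$ maps $C_b(\Omega)$ into $C_b(\Omega)$) is in general not a sublattice of $\mathscr{L}(\mathscr{M}(\Omega),\sigma)$: there exist a Polish space $\Omega$ (e.g. $\Omega=\{0\}\cup\{\pm 1/n:n\in\mathbb{N}\}\subset\mathbb{R}$) and a weakly continuous operator $T$ with $T^*C_b(\Omega)\subset C_b(\Omega)$ such that the weakly continuous operator associated with $\lvert k\rvert$ ($k$ the kernel of $T$) does not leave $C_b(\Omega)$ invariant under its adjoint, and moreover $T$ has no modulus in the ordered space of $\sigma(\mathscr{M}(\Omega),C_b(\Omega))$-continuous operators.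
   Context: $\Omega$ Polish, $\mathscr{M}(\Omega)$ the finite signed Borel measures, $C_b(\Omega)$ the bounded continuous functions, $B_b(\Omega)$ the bounded Borel functions, with duality $\langle f,\mu\rangle=\int f\,d\mu$. A transition kernel is a map $k:\Omega\times\mathscr{B}(\Omega)\to\mathbb{R}$, signed measure in the second variable and Borel measurable in the first; bounded if $\sup_x\lvert k\rvert(x,\Omega)<\infty$. A weakly continuous operator is one of the form $(T\mu)(A)=\int k(x,A)\,d\mu(x)$ with $k$ a bounded transition kernel (its associated kernel); $\mathscr{L}(\mathscr{M}(\Omega),\sigma)$ is the space of these. Operators are ordered by positivity: $S\le T$ iff $S\mu\le T\mu$ for all positive $\mu$. *)

theory Defs
  imports "HOL-Analysis.Analysis"
begin

text \<open>Finite signed measures on a measurable space M, given as real-valued set functions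
  (only their values on sets M matter).\<close>
definition signed_measure :: "'a measure \<Rightarrow> ('a set \<Rightarrow> real) \<Rightarrow> bool" where
  "signed_measure M \<mu> \<longleftrightarrow> \<mu> {} = 0 \<and>
     (\<forall>A :: nat \<Rightarrow> 'a set. range A \<subseteq> sets M \<longrightarrow> disjoint_family A \<longrightarrow>
        (\<lambda>i. \<mu> (A i)) sums \<mu> (\<Union>i. A i))"

definition positive_measure :: "'a measure \<Rightarrow> ('a set \<Rightarrow> real) \<Rightarrow> bool" where
  "positive_measure M \<mu> \<longleftrightarrow> signed_measure M \<mu> \<and> (\<forall>A\<in>sets M. 0 \<le> \<mu> A)"

definition tv :: "'a measure \<Rightarrow> ('a set \<Rightarrow> real) \<Rightarrow> 'a set \<Rightarrow> real" where
  "tv M \<mu> A = Sup {(\<Sum>B\<in>P. \<bar>\<mu> B\<bar>) | P. finite P \<and> P \<subseteq> sets M \<and> disjoint P \<and> \<Union>P = A}"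

definition pos_part :: "'a measure \<Rightarrow> ('a set \<Rightarrow> real) \<Rightarrow> 'a measure" where
  "pos_part M \<mu> = measure_of (space M) (sets M) (\<lambda>A. ennreal ((tv M \<mu> A + \<mu> A) / 2))"

definition neg_part :: "'a measure \<Rightarrow> ('a set \<Rightarrow> real) \<Rightarrow> 'a measure" where
  "neg_part M \<mu> = measure_of (space M) (sets M) (\<lambda>A. ennreal ((tv M \<mu> A - \<mu> A) / 2))"

definition sintegral :: "'a measure \<Rightarrow> ('a set \<Rightarrow> real) \<Rightarrow> ('a \<Rightarrow> real) \<Rightarrow> real" where
  "sintegral M \<mu> f = integral\<^sup>L (pos_part M \<mu>) f - integral\<^sup>L (neg_part M \<mu>) f"

definition bounded_kernel :: "'a measure \<Rightarrow> ('a \<Rightarrow> 'a set \<Rightarrow> real) \<Rightarrow> bool" where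
  "bounded_kernel M k \<longleftrightarrow>
     (\<forall>x\<in>space M. signed_measure M (k x)) \<and>
     (\<forall>A\<in>sets M. (\<lambda>x. k x A) \<in> borel_measurable M) \<and>
     (\<exists>C. \<forall>x\<in>space M. tv M (k x) (space M) \<le> C)"

definition kop :: "'a measure \<Rightarrow> ('a \<Rightarrow> 'a set \<Rightarrow> real) \<Rightarrow> ('a set \<Rightarrow> real) \<Rightarrow> ('a set \<Rightarrow> real)" where
  "kop M k \<mu> = (\<lambda>A. sintegral M \<mu> (\<lambda>x. k x A))"

definition kadj :: "'a measure \<Rightarrow> ('a \<Rightarrow> 'a set \<Rightarrow> real) \<Rightarrow> ('a \<Rightarrow> real) \<Rightarrow> ('a \<Rightarrow> real)" where
  "kadj M k f = (\<lambda>x. sintegral M (k x) f)"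

definition Cb :: "'a::topological_space set \<Rightarrow> ('a \<Rightarrow> real) set" where
  "Cb S = {f. continuous_on S f \<and> (\<exists>C. \<forall>x\<in>S. \<bar>f x\<bar> \<le> C)}"

definition Cb_invariant :: "'a::topological_space measure \<Rightarrow> ('a \<Rightarrow> 'a set \<Rightarrow> real) \<Rightarrow> bool" where
  "Cb_invariant M k \<longleftrightarrow> (\<forall>f\<in>Cb (space M). kadj M k f \<in> Cb (space M))"

text \<open>sigma(M, C_b)-continuous operators: weakly continuous with C_b-invariant adjoint.\<close>
definition sigma_Cb_ops :: "'a::topological_space measure \<Rightarrow> ('a \<Rightarrow> 'a set \<Rightarrow> real) set" where
  "sigma_Cb_ops M = {k. bounded_kernel M k \<and> Cb_invariant M k}"

definition op_le :: "'a measure \<Rightarrow> ('a \<Rightarrow> 'a set \<Rightarrow> real) \<Rightarrow> ('a \<Rightarrow> 'a set \<Rightarrow> real) \<Rightarrow> bool" where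
  "op_le M S T \<longleftrightarrow> (\<forall>\<mu>. positive_measure M \<mu> \<longrightarrow> (\<forall>A\<in>sets M. kop M S \<mu> A \<le> kop M T \<mu> A))"

definition is_modulus_in :: "'a measure \<Rightarrow> ('a \<Rightarrow> 'a set \<Rightarrow> real) set \<Rightarrow>
    ('a \<Rightarrow> 'a set \<Rightarrow> real) \<Rightarrow> ('a \<Rightarrow> 'a set \<Rightarrow> real) \<Rightarrow> bool" where
  "is_modulus_in M V T S \<longleftrightarrow> S \<in> V \<and> op_le M T S \<and> op_le M (\<lambda>x A. - T x A) S \<and>
     (\<forall>R\<in>V. op_le M T R \<longrightarrow> op_le M (\<lambda>x A. - T x A) R \<longrightarrow> op_le M S R)"

definition Omega :: "real set" where
  "Omega = {0} \<union> {1 / real n | n. n \<ge> 1} \<union> {- 1 / real n | n. n \<ge> 1}"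

definition OmegaM :: "real measure" where
  "OmegaM = restrict_space borel Omega"

end

theory Submission
  imports Defs
begin

(* The witness is the kernel  k(x) = delta_{x+} - delta_{-x+}  on the countable space
   Omega = {0} u {1/n} u {-1/n}, on which every subset is Borel.  Its adjoint
   f |-> f(x+) - f(-x+) preserves continuity, but |k|(x) = delta_x + delta_{-x} for x > 0
   and |k|(x) = 0 for x <= 0, so the total mass of |k|(x), i.e. the adjoint of |k| applied
   to the constant 1, jumps at 0.  If S were a modulus of k among the C_b-invariant
   kernels, it would lie above +-k and below the two C_b-invariant majorants
   delta_{|x|} + delta_{-x} and delta_x + delta_{-|x|} of +-k; this forces
   S(x, Omega) >= 2 for x > 0 and S(x, Omega) <= 0 for x < 0, again a jump at 0. *)

lemma signed_measure_Un:
  assumes mu: "signed_measure M \<mu>" and AB: "A \<in> sets M" "B \<in> sets M" "A \<inter> B = {}"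
  shows "\<mu> (A \<union> B) = \<mu> A + \<mu> B"
proof -
  have "range (binaryset A B) \<subseteq> sets M" "disjoint_family (binaryset A B)"
    using AB by (auto simp: binaryset_def disjoint_family_on_def)
  then have "(\<lambda>i. \<mu> (binaryset A B i)) sums \<mu> (A \<union> B)"
    using mu unfolding signed_measure_def by (metis UN_binaryset_eq)
  moreover have "(\<lambda>i. \<mu> (binaryset A B i)) sums (\<mu> A + \<mu> B)"
    using mu unfolding signed_measure_def by (intro binaryset_sums) simp
  ultimately show ?thesis by (rule sums_unique2)
qed

lemma signed_measure_Union:
  assumes mu: "signed_measure M \<mu>"
  shows "finite P \<Longrightarrow> P \<subseteq> sets M \<Longrightarrow> disjoint P \<Longrightarrow> sum \<mu> P = \<mu> (\<Union>P)"
proof (induction P rule: finite_induct)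
  case empty
  then show ?case using mu unfolding signed_measure_def by simp
next
  case (insert B P)
  have "B \<inter> \<Union>P = {}"
    using insert.prems(2) insert.hyps(2) unfolding pairwise_insert disjnt_def by blast
  moreover have "\<Union>P \<in> sets M"
    using insert.hyps(1) insert.prems(1) by (intro sets.finite_Union) auto
  moreover have "sum \<mu> P = \<mu> (\<Union>P)"
    using insert.prems by (intro insert.IH) (auto simp: pairwise_insert)
  ultimately show ?case
    using signed_measure_Un[OF mu, of B "\<Union>P"] insert.prems(1) insert.hyps by simp
qed

(* The defining properties only involve values on measurable sets. *)
lemma positive_measure_cong:
  assumes "positive_measure M \<mu>" "\<And>A. A \<in> sets M \<Longrightarrow> \<nu> A = \<mu> A"
  shows "positive_measure M \<nu>"
proof -
  have "(\<Union>i. A i) \<in> sets M" if "range A \<subseteq> sets M" for A :: "nat \<Rightarrow> _"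
    using that by auto
  then show ?thesis
    using assms unfolding positive_measure_def signed_measure_def
    by (simp add: image_subset_iff)
qed

definition two_point :: "real \<Rightarrow> 'a \<Rightarrow> real \<Rightarrow> 'a \<Rightarrow> 'a set \<Rightarrow> real" where
  "two_point c a e b = (\<lambda>A. c * indicator A a + e * indicator A b)"

lemma indicator_sums:
  assumes "disjoint_family A"
  shows "(\<lambda>i. indicator (A i) a :: real) sums indicator (\<Union>i. A i) a"
proof (cases "a \<in> (\<Union>i. A i)")
  case True
  then obtain j where j: "a \<in> A j" by blast
  with assms have "indicator (A i) a = (if i = j then 1 else (0::real))" for i
    unfolding disjoint_family_on_def by (auto simp: indicator_def)
  then show ?thesis using True sums_single[of j "\<lambda>_. 1::real"] by simp
qed simp

lemma two_point_signed: "signed_measure M (two_point c a e b)"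
  unfolding signed_measure_def two_point_def
  by (auto intro!: sums_add sums_mult indicator_sums)

lemma two_point_positive: "0 \<le> c \<Longrightarrow> 0 \<le> e \<Longrightarrow> positive_measure M (two_point c a e b)"
  using two_point_signed[of M c a e b] unfolding positive_measure_def by (simp add: two_point_def)

lemma two_point_abs_le: "\<bar>two_point c a e b A\<bar> \<le> \<bar>c\<bar> + \<bar>e\<bar>"
  unfolding two_point_def indicator_def by auto

lemma two_point_zero: "two_point 0 a 0 b = (\<lambda>_. 0)"
  by (simp add: two_point_def fun_eq_iff)

lemma two_point_same: "two_point 1 a (-1) a = (\<lambda>_. 0)"
  by (simp add: two_point_def fun_eq_iff)

(* Total variation: any positive measure dominating |mu| setwise dominates the sums over
   partitions, hence bounds tv from above and makes the defining supremum well behaved. *)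
lemma partition_sum_le_majorant:
  assumes nu: "positive_measure M \<nu>" and maj: "\<And>B. B \<in> sets M \<Longrightarrow> \<bar>\<mu> B\<bar> \<le> \<nu> B"
    and P: "finite P" "P \<subseteq> sets M" "disjoint P" "\<Union>P = A"
  shows "(\<Sum>B\<in>P. \<bar>\<mu> B\<bar>) \<le> \<nu> A"
proof -
  have "(\<Sum>B\<in>P. \<bar>\<mu> B\<bar>) \<le> (\<Sum>B\<in>P. \<nu> B)"
    using P(2) maj by (intro sum_mono) auto
  also have "\<dots> = \<nu> A"
    using signed_measure_Union[OF _ P(1-3)] nu P(4) unfolding positive_measure_def by simp
  finally show ?thesis .
qed

lemma tv_le_majorant:
  assumes nu: "positive_measure M \<nu>" and maj: "\<And>B. B \<in> sets M \<Longrightarrow> \<bar>\<mu> B\<bar> \<le> \<nu> B"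
    and A: "A \<in> sets M"
  shows "tv M \<mu> A \<le> \<nu> A"
  unfolding tv_def
proof (rule cSup_least)
  have "(\<Sum>B\<in>{A}. \<bar>\<mu> B\<bar>) \<in> {\<Sum>B\<in>P. \<bar>\<mu> B\<bar> |P. finite P \<and> P \<subseteq> sets M \<and> disjoint P \<and> \<Union>P = A}"
    using A by (intro CollectI exI[of _ "{A}"]) simp
  then show "{\<Sum>B\<in>P. \<bar>\<mu> B\<bar> |P. finite P \<and> P \<subseteq> sets M \<and> disjoint P \<and> \<Union>P = A} \<noteq> {}"
    by blast
  fix x assume "x \<in> {\<Sum>B\<in>P. \<bar>\<mu> B\<bar> |P. finite P \<and> P \<subseteq> sets M \<and> disjoint P \<and> \<Union>P = A}"
  then obtain P where "x = (\<Sum>B\<in>P. \<bar>\<mu> B\<bar>)" "finite P" "P \<subseteq> sets M" "disjoint P" "\<Union>P = A"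
    by blast
  then show "x \<le> \<nu> A" using partition_sum_le_majorant[OF nu maj] by simp
qed

lemma partition_sum_le_tv:
  assumes nu: "positive_measure M \<nu>" and maj: "\<And>B. B \<in> sets M \<Longrightarrow> \<bar>\<mu> B\<bar> \<le> \<nu> B"
    and P: "finite P" "P \<subseteq> sets M" "disjoint P" "\<Union>P = A"
  shows "(\<Sum>B\<in>P. \<bar>\<mu> B\<bar>) \<le> tv M \<mu> A"
  unfolding tv_def
proof (rule cSup_upper)
  show "(\<Sum>B\<in>P. \<bar>\<mu> B\<bar>) \<in> {\<Sum>B\<in>P. \<bar>\<mu> B\<bar> |P. finite P \<and> P \<subseteq> sets M \<and> disjoint P \<and> \<Union>P = A}"
    using P by blast
  show "bdd_above {\<Sum>B\<in>P. \<bar>\<mu> B\<bar> |P. finite P \<and> P \<subseteq> sets M \<and> disjoint P \<and> \<Union>P = A}"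
  proof (rule bdd_aboveI)
    fix x assume "x \<in> {\<Sum>B\<in>P. \<bar>\<mu> B\<bar> |P. finite P \<and> P \<subseteq> sets M \<and> disjoint P \<and> \<Union>P = A}"
    then obtain Q where "x = (\<Sum>B\<in>Q. \<bar>\<mu> B\<bar>)" "finite Q" "Q \<subseteq> sets M" "disjoint Q" "\<Union>Q = A"
      by blast
    then show "x \<le> \<nu> A" using partition_sum_le_majorant[OF nu maj] by simp
  qed
qed

lemma tv_positive:
  assumes mu: "positive_measure M \<mu>" and A: "A \<in> sets M"
  shows "tv M \<mu> A = \<mu> A"
proof (rule antisym)
  have maj: "\<And>B. B \<in> sets M \<Longrightarrow> \<bar>\<mu> B\<bar> \<le> \<mu> B"
    using mu unfolding positive_measure_def by auto
  show "tv M \<mu> A \<le> \<mu> A" by (rule tv_le_majorant[OF mu maj A])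
  have "(\<Sum>B\<in>{A}. \<bar>\<mu> B\<bar>) \<le> tv M \<mu> A"
    by (rule partition_sum_le_tv[OF mu maj]) (use A in auto)
  then show "\<mu> A \<le> tv M \<mu> A" using maj[OF A] by simp
qed

lemma tv_dirac_diff:
  assumes a: "{a} \<in> sets M" and ab: "a \<noteq> b" and A: "A \<in> sets M"
  shows "tv M (two_point 1 a (-1) b) A = two_point 1 a 1 b A"
proof (rule antisym)
  have nu: "positive_measure M (two_point 1 a 1 b)" by (rule two_point_positive) auto
  have maj: "\<And>B. B \<in> sets M \<Longrightarrow> \<bar>two_point 1 a (-1) b B\<bar> \<le> two_point 1 a 1 b B"
    by (auto simp: two_point_def indicator_def)
  show "tv M (two_point 1 a (-1) b) A \<le> two_point 1 a 1 b A"
    by (rule tv_le_majorant[OF nu maj A])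
  show "two_point 1 a 1 b A \<le> tv M (two_point 1 a (-1) b) A"
  proof (cases "a \<in> A")
    case True
    have split: "\<Union>{{a}, A - {a}} = A" "disjoint {{a}, A - {a}}" "{{a}, A - {a}} \<subseteq> sets M"
      using True a A by (auto simp: pairwise_def disjnt_def)
    have "(\<Sum>B\<in>{{a}, A - {a}}. \<bar>two_point 1 a (-1) b B\<bar>) \<le> tv M (two_point 1 a (-1) b) A"
      by (rule partition_sum_le_tv[OF nu maj _ split(3,2,1)]) auto
    moreover have "{a} \<noteq> A - {a}" by auto
    ultimately show ?thesis using True ab by (simp add: two_point_def indicator_def)
  next
    case False
    have "\<bar>two_point 1 a (-1) b A\<bar> \<le> tv M (two_point 1 a (-1) b) A"
      using partition_sum_le_tv[OF nu maj, of "{A}" A] A by simp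
    moreover have "two_point 1 a 1 b A = \<bar>two_point 1 a (-1) b A\<bar>"
      using False by (simp add: two_point_def)
    ultimately show ?thesis by simp
  qed
qed

(* A positive set function viewed as an Isabelle measure; pos_part and neg_part of Defs
   are of this form. *)
definition to_measure :: "'a measure \<Rightarrow> ('a set \<Rightarrow> real) \<Rightarrow> 'a measure" where
  "to_measure M \<mu> = measure_of (space M) (sets M) (\<lambda>A. ennreal (\<mu> A))"

lemma sets_to_measure[simp]: "sets (to_measure M \<mu>) = sets M"
  unfolding to_measure_def by (rule sigma_algebra.sets_measure_of_eq[OF sets.sigma_algebra_axioms])

lemma space_to_measure[simp]: "space (to_measure M \<mu>) = space M"
  unfolding to_measure_def by (rule space_measure_of_conv)

lemma to_measure_cong:
  assumes "\<And>A. A \<in> sets M \<Longrightarrow> \<mu> A = \<nu> A"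
  shows "to_measure M \<mu> = to_measure M \<nu>"
  unfolding to_measure_def
proof (rule measure_of_eq)
  show "sets M \<subseteq> Pow (space M)" by (rule sets.space_closed)
qed (use assms in \<open>simp add: sets.sigma_sets_eq\<close>)

lemma emeasure_to_measure:
  assumes mu: "positive_measure M \<mu>" and A: "A \<in> sets M"
  shows "emeasure (to_measure M \<mu>) A = ennreal (\<mu> A)"
  unfolding to_measure_def
proof (rule emeasure_measure_of_sigma[OF sets.sigma_algebra_axioms _ _ A])
  show "positive (sets M) (\<lambda>A. ennreal (\<mu> A))"
    using mu unfolding positive_def positive_measure_def signed_measure_def by simp
  show "countably_additive (sets M) (\<lambda>A. ennreal (\<mu> A))"
    unfolding countably_additive_def
  proof (intro allI impI)
    fix A :: "nat \<Rightarrow> _" assume A: "range A \<subseteq> sets M" "disjoint_family A"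
    then have s: "(\<lambda>i. \<mu> (A i)) sums \<mu> (\<Union>i. A i)"
      using mu unfolding positive_measure_def signed_measure_def by blast
    have "\<And>i. 0 \<le> \<mu> (A i)" using mu A unfolding positive_measure_def by auto
    then have "(\<Sum>i. ennreal (\<mu> (A i))) = ennreal (\<Sum>i. \<mu> (A i))"
      using s by (intro suminf_ennreal2) (auto simp: sums_iff)
    then show "(\<Sum>i. ennreal (\<mu> (A i))) = ennreal (\<mu> (\<Union>i. A i))"
      using s by (simp add: sums_iff)
  qed
qed

(* For a positive measure the negative part vanishes, so sintegral is the ordinary
   integral; in particular the integral of 1 is the total mass. *)
lemma sintegral_positive:
  assumes mu: "positive_measure M \<mu>"
  shows "sintegral M \<mu> f = integral\<^sup>L (to_measure M \<mu>) f"
proof -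
  have tv: "\<And>A. A \<in> sets M \<Longrightarrow> tv M \<mu> A = \<mu> A" using tv_positive[OF mu] .
  have "pos_part M \<mu> = to_measure M \<mu>"
    unfolding pos_part_def to_measure_def[symmetric]
      to_measure_def[of M "\<lambda>A. (tv M \<mu> A + \<mu> A) / 2", symmetric]
    by (rule to_measure_cong) (simp add: tv)
  moreover have "neg_part M \<mu> = null_measure M"
    unfolding neg_part_def null_measure_def
    by (rule measure_of_eq[OF sets.space_closed]) (simp add: sets.sigma_sets_eq tv)
  ultimately show ?thesis unfolding sintegral_def by simp
qed

lemma sintegral_one:
  assumes mu: "positive_measure M \<mu>"
  shows "sintegral M \<mu> (\<lambda>_. 1) = \<mu> (space M)"
proof -
  have "0 \<le> \<mu> (space M)" using mu unfolding positive_measure_def by simp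
  then have "measure (to_measure M \<mu>) (space M) = \<mu> (space M)"
    unfolding measure_def using emeasure_to_measure[OF mu sets.top] by simp
  then show ?thesis unfolding sintegral_positive[OF mu] by simp
qed

(* On a discrete measurable space the integral against c delta_a + e delta_b (c, e >= 0)
   is c f(a) + e f(b): f agrees almost everywhere with a combination of two indicators. *)
lemma integral_two_point:
  assumes discrete: "sets M = Pow (space M)" and ab: "a \<in> space M" "b \<in> space M"
    and ce: "0 \<le> c" "0 \<le> e"
  shows "integral\<^sup>L (to_measure M (two_point c a e b)) f = c * f a + e * f b"
proof -
  let ?N = "to_measure M (two_point c a e b)"
  have pos: "positive_measure M (two_point c a e b)" by (rule two_point_positive[OF ce])
  have em: "emeasure ?N A = ennreal (two_point c a e b A)" if "A \<subseteq> space M" for A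
    using emeasure_to_measure[OF pos] that discrete by simp
  have ms: "measure ?N A = two_point c a e b A" if "A \<subseteq> space M" for A
  proof -
    have "0 \<le> two_point c a e b A" using ce by (simp add: two_point_def)
    then show ?thesis unfolding measure_def em[OF that] by simp
  qed
  have sub: "{a} \<subseteq> space M" "{b} - {a} \<subseteq> space M" using ab by auto
  have meas: "h \<in> borel_measurable ?N" for h :: "_ \<Rightarrow> real"
    using discrete by (intro measurableI) auto
  have int: "integrable ?N (indicator A :: _ \<Rightarrow> real)" if "A \<subseteq> space M" for A
    using em[OF that] that discrete by (simp add: integrable_indicator_iff Int_absorb2)
  define g where "g = (\<lambda>x. f a * indicator {a} x + f b * indicator ({b} - {a}) x)"
  have "AE x in ?N. f x = g x"
  proof (rule AE_I')
    show "space M - {a, b} \<in> null_sets ?N"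
      using em[of "space M - {a, b}"] discrete by (intro null_setsI) (auto simp: two_point_def)
    show "{x \<in> space ?N. f x \<noteq> g x} \<subseteq> space M - {a, b}"
      by (cases "a = b") (auto simp: g_def)
  qed
  then have "integral\<^sup>L ?N f = integral\<^sup>L ?N g"
    by (rule integral_cong_AE[OF meas meas])
  also have "\<dots> = f a * measure ?N {a} + f b * measure ?N ({b} - {a})"
    unfolding g_def using int sub by (simp add: Int_absorb2)
  also have "\<dots> = c * f a + e * f b"
    using sub by (simp add: ms) (cases "a = b"; simp add: two_point_def algebra_simps)
  finally show ?thesis .
qed

lemma sintegral_two_point:
  assumes discrete: "sets M = Pow (space M)" and ab: "a \<in> space M" "b \<in> space M"
    and ce: "0 \<le> c" "0 \<le> e" and mu: "\<And>A. A \<in> sets M \<Longrightarrow> \<mu> A = two_point c a e b A"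
  shows "sintegral M \<mu> f = c * f a + e * f b"
proof -
  have pos: "positive_measure M \<mu>"
    by (rule positive_measure_cong[OF two_point_positive[OF ce] mu])
  have "to_measure M \<mu> = to_measure M (two_point c a e b)"
    by (rule to_measure_cong[OF mu])
  then show ?thesis
    unfolding sintegral_positive[OF pos] using integral_two_point[OF discrete ab ce] by simp
qed

(* Integral against delta_a - delta_b: its Jordan parts are delta_a and delta_b. *)
lemma sintegral_dirac_diff:
  assumes discrete: "sets M = Pow (space M)" and ab: "a \<in> space M" "b \<in> space M"
  shows "sintegral M (two_point 1 a (-1) b) f = f a - f b"
proof (cases "a = b")
  case True
  then show ?thesis
    using sintegral_two_point[OF discrete ab(1) ab(1), of 0 0 "two_point 1 a (-1) b" f]
    by (simp add: two_point_def)
next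
  case False
  have tv: "\<And>A. A \<in> sets M \<Longrightarrow> tv M (two_point 1 a (-1) b) A = two_point 1 a 1 b A"
    using tv_dirac_diff[OF _ False] discrete ab by simp
  have "pos_part M (two_point 1 a (-1) b) = to_measure M (two_point 1 a 0 a)"
    unfolding pos_part_def to_measure_def
    by (rule measure_of_eq[OF sets.space_closed]) (simp add: sets.sigma_sets_eq tv, simp add: two_point_def)
  moreover have "neg_part M (two_point 1 a (-1) b) = to_measure M (two_point 1 b 0 b)"
    unfolding neg_part_def to_measure_def
    by (rule measure_of_eq[OF sets.space_closed]) (simp add: sets.sigma_sets_eq tv, simp add: two_point_def)
  ultimately show ?thesis
    unfolding sintegral_def
    using integral_two_point[OF discrete ab(1) ab(1), of 1 0 f]
      integral_two_point[OF discrete ab(2) ab(2), of 1 0 f] by simp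
qed

(* Operator order on a discrete space: testing against Dirac measures shows that S <= T
   forces S(y, A) <= T(y, A) pointwise, and conversely a pointwise inequality between
   bounded kernels integrates to S mu <= T mu for every positive mu. *)
lemma op_le_pointwise:
  assumes discrete: "sets M = Pow (space M)" and le: "op_le M S T"
    and y: "y \<in> space M" and A: "A \<in> sets M"
  shows "S y A \<le> T y A"
proof -
  have dirac: "kop M k (two_point 1 y 0 y) A = k y A" for k
    unfolding kop_def using sintegral_two_point[OF discrete y y, of 1 0] by simp
  have "positive_measure M (two_point 1 y 0 y)" by (rule two_point_positive) auto
  then show ?thesis using le A dirac[of S] dirac[of T] unfolding op_le_def by metis
qed

lemma op_le_of_pointwise:
  assumes discrete: "sets M = Pow (space M)"
    and le: "\<And>x A. x \<in> space M \<Longrightarrow> A \<in> sets M \<Longrightarrow> S x A \<le> T x A"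
    and bounded: "\<And>x A. x \<in> space M \<Longrightarrow> A \<in> sets M \<Longrightarrow> \<bar>S x A\<bar> \<le> C \<and> \<bar>T x A\<bar> \<le> C"
  shows "op_le M S T"
  unfolding op_le_def
proof (intro allI impI ballI)
  fix \<mu> A assume mu: "positive_measure M \<mu>" and A: "A \<in> sets M"
  let ?N = "to_measure M \<mu>"
  have "finite_measure ?N"
    using emeasure_to_measure[OF mu sets.top] by (intro finite_measureI) simp
  moreover have "(\<lambda>x. k x A) \<in> borel_measurable ?N" for k :: "_ \<Rightarrow> _ \<Rightarrow> real"
    using discrete by (intro measurableI) auto
  ultimately have "integrable ?N (\<lambda>x. k x A)"
    if "\<And>x. x \<in> space M \<Longrightarrow> \<bar>k x A\<bar> \<le> C" for k :: "_ \<Rightarrow> _ \<Rightarrow> real"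
    using that by (intro finite_measure.integrable_const_bound[where B=C]) auto
  then have "integral\<^sup>L ?N (\<lambda>x. S x A) \<le> integral\<^sup>L ?N (\<lambda>x. T x A)"
    using bounded le A by (intro integral_mono) auto
  then show "kop M S \<mu> A \<le> kop M T \<mu> A" unfolding kop_def sintegral_positive[OF mu] .
qed

lemma bounded_kernel_discrete:
  assumes discrete: "sets M = Pow (space M)"
    and "\<And>x. x \<in> space M \<Longrightarrow> signed_measure M (k x)"
    and "\<And>x. x \<in> space M \<Longrightarrow> tv M (k x) (space M) \<le> C"
  shows "bounded_kernel M k"
  unfolding bounded_kernel_def using assms by (auto intro!: measurableI exI[of _ C])

lemma Cb_invariant_two_point:
  fixes M :: "'a::topological_space measure"
  assumes a: "continuous_on (space M) a" "a ` space M \<subseteq> space M"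
    and b: "continuous_on (space M) b" "b ` space M \<subseteq> space M"
    and adj: "\<And>f x. x \<in> space M \<Longrightarrow> kadj M k f x = c * f (a x) + e * f (b x)"
  shows "Cb_invariant M k"
  unfolding Cb_invariant_def
proof
  fix f assume "f \<in> Cb (space M)"
  then obtain C where f: "continuous_on (space M) f" and C: "\<And>x. x \<in> space M \<Longrightarrow> \<bar>f x\<bar> \<le> C"
    unfolding Cb_def by auto
  have "continuous_on (space M) (\<lambda>x. c * f (a x) + e * f (b x))"
    using continuous_on_compose2[OF f a] continuous_on_compose2[OF f b]
    by (intro continuous_intros)
  then have "continuous_on (space M) (kadj M k f)"
    using adj continuous_on_cong by force
  moreover have "\<bar>kadj M k f x\<bar> \<le> \<bar>c\<bar> * C + \<bar>e\<bar> * C" if x: "x \<in> space M" for x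
  proof -
    have "\<bar>f (a x)\<bar> \<le> C" "\<bar>f (b x)\<bar> \<le> C" using C a(2) b(2) x by auto
    then have "\<bar>c * f (a x)\<bar> \<le> \<bar>c\<bar> * C" "\<bar>e * f (b x)\<bar> \<le> \<bar>e\<bar> * C"
      by (auto simp: abs_mult intro: mult_left_mono)
    then show ?thesis unfolding adj[OF x] by linarith
  qed
  ultimately show "kadj M k f \<in> Cb (space M)" unfolding Cb_def by blast
qed

(* The adjoint of a C_b-invariant kernel applied to the constant 1 is continuous; for
   positive kernels this is the total mass x |-> k(x, space M). *)
lemma total_mass_continuous:
  assumes inv: "Cb_invariant M k" and pos: "\<And>x. x \<in> space M \<Longrightarrow> positive_measure M (k x)"
  shows "continuous_on (space M) (\<lambda>x. k x (space M))"
proof -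
  have "(\<lambda>_. 1) \<in> Cb (space M)" unfolding Cb_def by auto
  then have "continuous_on (space M) (kadj M k (\<lambda>_. 1))"
    using inv unfolding Cb_invariant_def Cb_def by blast
  moreover have "kadj M k (\<lambda>_. 1) x = k x (space M)" if "x \<in> space M" for x
    unfolding kadj_def using sintegral_one[OF pos[OF that]] .
  ultimately show ?thesis using continuous_on_cong by force
qed

(* The space Omega: countable, hence every subset is Borel and OmegaM is discrete. *)
lemma Omega_countable: "countable Omega"
proof -
  have eq: "Omega = {0} \<union> (\<lambda>n. 1 / real n) ` {n. n \<ge> 1} \<union> (\<lambda>n. - 1 / real n) ` {n. n \<ge> 1}"
    unfolding Omega_def by auto
  show ?thesis unfolding eq by (intro countable_Un countable_image) auto
qed

lemma space_OmegaM[simp]: "space OmegaM = Omega"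
  unfolding OmegaM_def by (simp add: space_restrict_space)

lemma sets_OmegaM[simp]: "sets OmegaM = Pow Omega"
proof -
  have "B \<in> sets borel" if "B \<subseteq> Omega" for B :: "real set"
    using countable_subset[OF that Omega_countable] by (rule sets.countable[rotated]) auto
  then have "X \<in> (\<inter>) Omega ` sets borel" if "X \<subseteq> Omega" for X
    using that by (intro image_eqI[of _ _ X]) auto
  then show ?thesis unfolding OmegaM_def sets_restrict_space by auto
qed

lemma OmegaM_discrete: "sets OmegaM = Pow (space OmegaM)"
  by simp

lemma Omega_iff:
  "x \<in> Omega \<longleftrightarrow> x = 0 \<or> (\<exists>n\<ge>1. x = 1 / real n) \<or> (\<exists>n\<ge>1. x = - 1 / real n)"
  unfolding Omega_def by blast

lemma Omega_zero: "0 \<in> Omega"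
  unfolding Omega_iff by simp

lemma Omega_uminus: "x \<in> Omega \<Longrightarrow> - x \<in> Omega"
  unfolding Omega_iff by (elim disjE exE conjE) auto

lemma Omega_abs: "x \<in> Omega \<Longrightarrow> \<bar>x\<bar> \<in> Omega"
  using Omega_uminus[of x] by (cases "0 \<le> x") auto

lemma Omega_max: "x \<in> Omega \<Longrightarrow> max x 0 \<in> Omega"
  using Omega_zero by (cases "0 \<le> x") (auto simp: max_def)

lemma Omega_inverse: "inverse (real (Suc n)) \<in> Omega"
  unfolding Omega_iff by (intro disjI2 disjI1 exI[of _ "Suc n"]) (simp add: inverse_eq_divide)

(* A continuous function on Omega cannot be >= c on the points 1/n and <= d on the
   points -1/n unless c <= d: both sequences converge to 0. *)
lemma Omega_no_jump:
  fixes g :: "real \<Rightarrow> real"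
  assumes g: "continuous_on Omega g"
    and pos: "\<And>n. c \<le> g (inverse (real (Suc n)))"
    and neg: "\<And>n. g (- inverse (real (Suc n))) \<le> d"
  shows "c \<le> d"
proof -
  have lim: "(\<lambda>n. g (s n)) \<longlonglongrightarrow> g 0" if "s \<longlonglongrightarrow> 0" "\<And>n. s n \<in> Omega" for s
    using that by (intro continuous_on_tendsto_compose[OF g]) (auto simp: Omega_zero)
  have "c \<le> g 0"
    using LIMSEQ_le_const[OF lim[OF LIMSEQ_inverse_real_of_nat Omega_inverse]] pos by blast
  also have "g 0 \<le> d"
  proof -
    have "(\<lambda>n. - inverse (real (Suc n))) \<longlonglongrightarrow> 0"
      using tendsto_minus[OF LIMSEQ_inverse_real_of_nat] by simp
    then show ?thesis
      using LIMSEQ_le_const2[OF lim[of "\<lambda>n. - inverse (real (Suc n))"]] Omega_uminus[OF Omega_inverse]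
        neg by blast
  qed
  finally show ?thesis .
qed


definition ex_kernel :: "real \<Rightarrow> real set \<Rightarrow> real" where
  "ex_kernel x = two_point 1 (max x 0) (-1) (- max x 0)"

definition ex_kernel_abs :: "real \<Rightarrow> real set \<Rightarrow> real" where
  "ex_kernel_abs x = (if 0 < x then two_point 1 x 1 (- x) else (\<lambda>_. 0))"

lemma ex_kernel_eval: "ex_kernel x A = (if 0 < x then indicator A x - indicator A (- x) else 0)"
  by (simp add: ex_kernel_def two_point_def max_def)

lemma ex_kernel_abs_positive: "positive_measure M (ex_kernel_abs x)"
  using two_point_positive[of 1 1 M x "- x"] two_point_positive[of 0 0 M x x]
  by (simp add: ex_kernel_abs_def two_point_zero)

lemma ex_kernel_tv:
  assumes x: "x \<in> Omega" and A: "A \<subseteq> Omega"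
  shows "tv OmegaM (ex_kernel x) A = ex_kernel_abs x A"
proof (cases "0 < x")
  case True
  then have "tv OmegaM (two_point 1 x (-1) (- x)) A = two_point 1 x 1 (- x) A"
    using x A by (intro tv_dirac_diff) auto
  then show ?thesis using True by (simp add: ex_kernel_def ex_kernel_abs_def)
next
  case False
  then have "ex_kernel x = (\<lambda>_. 0)" "ex_kernel_abs x = (\<lambda>_. 0)"
    by (simp_all add: ex_kernel_def ex_kernel_abs_def max_def two_point_same)
  then show ?thesis
    using tv_positive[OF ex_kernel_abs_positive[of OmegaM x], of A] A by simp
qed

lemma ex_kernel_tv_positive:
  assumes x: "x \<in> Omega"
  shows "positive_measure OmegaM (tv OmegaM (ex_kernel x))"
  by (rule positive_measure_cong[OF ex_kernel_abs_positive]) (simp add: ex_kernel_tv x)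

lemma ex_kernel_tv_mass:
  assumes x: "x \<in> Omega"
  shows "tv OmegaM (ex_kernel x) Omega = (if 0 < x then 2 else 0)"
  using x Omega_uminus[OF x]
  by (simp add: ex_kernel_tv ex_kernel_abs_def two_point_def)

(* k is sigma(M, C_b)-continuous: its adjoint is f |-> f(x+) - f(-x+). *)
lemma ex_kernel_sigma_Cb: "ex_kernel \<in> sigma_Cb_ops OmegaM"
  unfolding sigma_Cb_ops_def
proof (intro CollectI conjI)
  show "bounded_kernel OmegaM ex_kernel"
    by (rule bounded_kernel_discrete[OF OmegaM_discrete, where C=2])
      (simp_all add: ex_kernel_def two_point_signed ex_kernel_tv_mass[unfolded ex_kernel_def])
  show "Cb_invariant OmegaM ex_kernel"
  proof (rule Cb_invariant_two_point[where c=1 and e="-1"])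
    show "continuous_on (space OmegaM) (\<lambda>x. max x 0)"
      "continuous_on (space OmegaM) (\<lambda>x. - max x 0)"
      by (auto intro!: continuous_intros)
    show "(\<lambda>x. max x 0) ` space OmegaM \<subseteq> space OmegaM"
      "(\<lambda>x. - max x 0) ` space OmegaM \<subseteq> space OmegaM"
      by (auto intro: Omega_max Omega_uminus)
    fix f x assume "x \<in> space OmegaM"
    then show "kadj OmegaM ex_kernel f x = 1 * f (max x 0) + -1 * f (- max x 0)"
      unfolding kadj_def ex_kernel_def
      by (subst sintegral_dirac_diff[OF OmegaM_discrete]) (auto intro: Omega_max Omega_uminus)
  qed
qed

(* |k| is a bounded kernel, but its total mass jumps from 0 to 2 at x = 0, so its
   adjoint does not preserve C_b. *)
lemma ex_kernel_abs_bounded: "bounded_kernel OmegaM (\<lambda>x A. tv OmegaM (ex_kernel x) A)"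
proof (rule bounded_kernel_discrete[OF OmegaM_discrete, where C=2])
  fix x assume "x \<in> space OmegaM"
  then have x: "x \<in> Omega" by simp
  show "signed_measure OmegaM (tv OmegaM (ex_kernel x))"
    using ex_kernel_tv_positive[OF x] unfolding positive_measure_def by blast
  show "tv OmegaM (tv OmegaM (ex_kernel x)) (space OmegaM) \<le> 2"
    using tv_positive[OF ex_kernel_tv_positive[OF x]] ex_kernel_tv_mass[OF x] by simp
qed

lemma ex_kernel_abs_not_Cb_invariant:
  "\<not> Cb_invariant OmegaM (\<lambda>x A. tv OmegaM (ex_kernel x) A)"
proof
  assume "Cb_invariant OmegaM (\<lambda>x A. tv OmegaM (ex_kernel x) A)"
  then have cont: "continuous_on Omega (\<lambda>x. tv OmegaM (ex_kernel x) Omega)"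
    using total_mass_continuous[of OmegaM "\<lambda>x. tv OmegaM (ex_kernel x)"] ex_kernel_tv_positive
    by simp
  have "tv OmegaM (ex_kernel (inverse (real (Suc n)))) Omega = 2" for n
    using ex_kernel_tv_mass[OF Omega_inverse] by simp
  moreover have "tv OmegaM (ex_kernel (- inverse (real (Suc n)))) Omega = 0" for n
    using ex_kernel_tv_mass[OF Omega_uminus[OF Omega_inverse]] by simp
  ultimately have "(2::real) \<le> 0"
    using Omega_no_jump[OF cont, of 2 0] by simp
  then show False by simp
qed


lemma two_point_kernel_sigma_Cb:
  assumes a: "continuous_on Omega a" "a ` Omega \<subseteq> Omega"
    and b: "continuous_on Omega b" "b ` Omega \<subseteq> Omega"
  shows "(\<lambda>x. two_point 1 (a x) 1 (b x)) \<in> sigma_Cb_ops OmegaM"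
  unfolding sigma_Cb_ops_def
proof (intro CollectI conjI)
  show "bounded_kernel OmegaM (\<lambda>x. two_point 1 (a x) 1 (b x))"
  proof (rule bounded_kernel_discrete[OF OmegaM_discrete, where C=2])
    fix x
    show "signed_measure OmegaM (two_point 1 (a x) 1 (b x))" by (rule two_point_signed)
    have "tv OmegaM (two_point 1 (a x) 1 (b x)) Omega = two_point 1 (a x) 1 (b x) Omega"
      by (rule tv_positive) (auto intro: two_point_positive)
    then show "tv OmegaM (two_point 1 (a x) 1 (b x)) (space OmegaM) \<le> 2"
      using two_point_abs_le[of 1 "a x" 1 "b x" Omega] by simp
  qed
  show "Cb_invariant OmegaM (\<lambda>x. two_point 1 (a x) 1 (b x))"
  proof (rule Cb_invariant_two_point[where c=1 and e=1])
    fix f x assume "x \<in> space OmegaM"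
    then show "kadj OmegaM (\<lambda>x. two_point 1 (a x) 1 (b x)) f x = 1 * f (a x) + 1 * f (b x)"
      unfolding kadj_def using a(2) b(2)
      by (intro sintegral_two_point[OF OmegaM_discrete]) auto
  qed (use a b in simp_all)
qed

(* Two sigma(M, C_b)-continuous majorants of +-k: they agree with |k| for x > 0 but put
   mass 2 at |x| resp. at -|x| = x for x < 0. *)
definition majorant_abs :: "real \<Rightarrow> real set \<Rightarrow> real" where
  "majorant_abs x = two_point 1 \<bar>x\<bar> 1 (- x)"

definition majorant_negabs :: "real \<Rightarrow> real set \<Rightarrow> real" where
  "majorant_negabs x = two_point 1 x 1 (- \<bar>x\<bar>)"

lemma majorants_sigma_Cb:
  "majorant_abs \<in> sigma_Cb_ops OmegaM" "majorant_negabs \<in> sigma_Cb_ops OmegaM"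
proof -
  have "(\<lambda>x. two_point 1 \<bar>x\<bar> 1 (- x)) \<in> sigma_Cb_ops OmegaM"
    by (rule two_point_kernel_sigma_Cb) (auto intro!: continuous_intros Omega_abs Omega_uminus)
  then show "majorant_abs \<in> sigma_Cb_ops OmegaM"
    by (simp add: majorant_abs_def[abs_def])
  have "(\<lambda>x. two_point 1 x 1 (- \<bar>x\<bar>)) \<in> sigma_Cb_ops OmegaM"
    by (rule two_point_kernel_sigma_Cb) (auto intro!: continuous_intros Omega_abs Omega_uminus)
  then show "majorant_negabs \<in> sigma_Cb_ops OmegaM"
    by (simp add: majorant_negabs_def[abs_def])
qed

lemma ex_kernel_below_majorant:
  assumes R: "R = majorant_abs \<or> R = majorant_negabs"
  shows "op_le OmegaM ex_kernel R \<and> op_le OmegaM (\<lambda>x A. - ex_kernel x A) R"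
proof -
  have dom: "\<bar>ex_kernel x A\<bar> \<le> R x A" for x A
    using R by (auto simp: ex_kernel_eval majorant_abs_def majorant_negabs_def two_point_def
        indicator_def)
  have bounded: "\<bar>ex_kernel x A\<bar> \<le> 2" "\<bar>R x A\<bar> \<le> 2" for x A
    using R two_point_abs_le[of 1 _ "-1" _ A] two_point_abs_le[of 1 _ 1 _ A]
    by (auto simp: ex_kernel_def majorant_abs_def majorant_negabs_def)
  show ?thesis
    using dom bounded
    by (intro conjI op_le_of_pointwise[OF OmegaM_discrete, where C=2]) (auto simp: abs_le_iff)
qed


(* Any kernel of signed measures squeezed between |k| and both majorants has total mass
   >= 2 at points x > 0 and <= 0 at points x < 0: split Omega into {x} and Omega - {x}. *)
lemma squeezed_kernel_mass:
  assumes signed: "signed_measure OmegaM \<mu>" and x: "x \<in> Omega"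
    and lower: "\<And>A. A \<subseteq> Omega \<Longrightarrow> \<bar>ex_kernel x A\<bar> \<le> \<mu> A"
    and upper: "\<And>A. A \<subseteq> Omega \<Longrightarrow> \<mu> A \<le> majorant_abs x A \<and> \<mu> A \<le> majorant_negabs x A"
  shows "0 < x \<Longrightarrow> 2 \<le> \<mu> Omega" and "x < 0 \<Longrightarrow> \<mu> Omega \<le> 0"
proof -
  have split: "\<mu> Omega = \<mu> {x} + \<mu> (Omega - {x})"
    using signed_measure_Un[OF signed, of "{x}" "Omega - {x}"] x by (simp add: insert_absorb)
  show "2 \<le> \<mu> Omega" if "0 < x"
  proof -
    have "1 \<le> \<mu> {x}" "1 \<le> \<mu> (Omega - {x})"
      using lower[of "{x}"] lower[of "Omega - {x}"] that x Omega_uminus[OF x]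
      by (simp_all add: ex_kernel_eval)
    then show ?thesis using split by simp
  qed
  show "\<mu> Omega \<le> 0" if "x < 0"
  proof -
    have "\<mu> {x} \<le> 0" "\<mu> (Omega - {x}) \<le> 0"
      using upper[of "{x}"] upper[of "Omega - {x}"] that x
      by (simp_all add: majorant_abs_def majorant_negabs_def two_point_def)
    then show ?thesis using split by simp
  qed
qed

(* A modulus S would be squeezed as above, hence be a positive C_b-invariant kernel whose
   total mass jumps at 0. *)
lemma ex_kernel_no_modulus: "\<not> (\<exists>S. is_modulus_in OmegaM (sigma_Cb_ops OmegaM) ex_kernel S)"
proof
  assume "\<exists>S. is_modulus_in OmegaM (sigma_Cb_ops OmegaM) ex_kernel S"
  then obtain S where S: "bounded_kernel OmegaM S" "Cb_invariant OmegaM S"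
    and lower: "op_le OmegaM ex_kernel S" "op_le OmegaM (\<lambda>x A. - ex_kernel x A) S"
    and upper: "op_le OmegaM S majorant_abs" "op_le OmegaM S majorant_negabs"
    using majorants_sigma_Cb ex_kernel_below_majorant
    unfolding is_modulus_in_def sigma_Cb_ops_def by blast
  have signed: "signed_measure OmegaM (S x)" if "x \<in> Omega" for x
    using S(1) that unfolding bounded_kernel_def by simp
  have lower_pt: "\<bar>ex_kernel x A\<bar> \<le> S x A" if "x \<in> Omega" "A \<subseteq> Omega" for x A
    using op_le_pointwise[OF OmegaM_discrete lower(1)] op_le_pointwise[OF OmegaM_discrete lower(2)]
      that by (simp add: abs_le_iff)
  have upper_pt: "S x A \<le> majorant_abs x A \<and> S x A \<le> majorant_negabs x A"
    if "x \<in> Omega" "A \<subseteq> Omega" for x A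
    using op_le_pointwise[OF OmegaM_discrete upper(1)] op_le_pointwise[OF OmegaM_discrete upper(2)]
      that by simp
  have mass: "(0 < x \<longrightarrow> 2 \<le> S x Omega) \<and> (x < 0 \<longrightarrow> S x Omega \<le> 0)" if "x \<in> Omega" for x
    using squeezed_kernel_mass[OF signed[OF that] that lower_pt[OF that] upper_pt[OF that]] by blast
  have "positive_measure OmegaM (S x)" if "x \<in> Omega" for x
    unfolding positive_measure_def using signed[OF that] lower_pt[OF that]
    by (auto intro: order_trans[OF abs_ge_zero])
  then have "continuous_on Omega (\<lambda>x. S x Omega)"
    using total_mass_continuous[OF S(2)] by simp
  moreover have "2 \<le> S (inverse (real (Suc n))) Omega" for n
    using mass[OF Omega_inverse] by simp
  moreover have "S (- inverse (real (Suc n))) Omega \<le> 0" for n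
    using mass[OF Omega_uminus[OF Omega_inverse]] by simp
  ultimately have "(2::real) \<le> 0" by (rule Omega_no_jump)
  then show False by simp
qed

theorem mainTheorem3:
  "\<exists>k. k \<in> sigma_Cb_ops OmegaM
     \<and> bounded_kernel OmegaM (\<lambda>x A. tv OmegaM (k x) A)
     \<and> \<not> Cb_invariant OmegaM (\<lambda>x A. tv OmegaM (k x) A)
     \<and> \<not> (\<exists>S. is_modulus_in OmegaM (sigma_Cb_ops OmegaM) k S)"
proof (intro exI[of _ ex_kernel] conjI)
  show "ex_kernel \<in> sigma_Cb_ops OmegaM" by (rule ex_kernel_sigma_Cb)
  show "bounded_kernel OmegaM (\<lambda>x A. tv OmegaM (ex_kernel x) A)" by (rule ex_kernel_abs_bounded)
  show "\<not> Cb_invariant OmegaM (\<lambda>x A. tv OmegaM (ex_kernel x) A)"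
    by (rule ex_kernel_abs_not_Cb_invariant)
  show "\<not> (\<exists>S. is_modulus_in OmegaM (sigma_Cb_ops OmegaM) ex_kernel S)"
    by (rule ex_kernel_no_modulus)
qed

end
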